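(* Let $r,s\in\mathrm{ri}(\Delta_N)$, let $I$ be a dual feasible basis of $(\mathrm{P}_{\mathrm{OT}})$ inducing the optimal transport coupling $\pi^\star=\pi(I,(r_\dagger,s))\ge0$, and let $J$ be the set of positions $j\in\{1,\dots,2N-1\}$ such that the $j$-th element of $I$ (in increasing order) is an index at which $\pi^\star$ vanishes. Define the closed convex cone $$H=\bigcap_{j\in J}\big\{v\in\mathbb{R}^{2N-1}:[A_{\dagger I}^{-1}v]_j\ge0\big\}.$$ Then $\mathbb P(G\in\partial H)=0$, where $G=(G^1,G^2)$ with $G^1,G^2$ independent as defined below.
   Context: $\Delta_N=\{r\in\mathbb{R}^N:r_i\ge0,\sum r_i=1\}$, $\mathrm{ri}(\Delta_N)$ those with all $r_i>0$. Reduced OT: vectorize $\pi,c\in\mathbb{R}^{N^2}$ via index $(i-1)N+j$; $A_\dagger\in\mathbb{R}^{(2N-1)\times N^2}$ with $(A_\dagger\pi)_i=\sum_j\pi_{ij}$ ($i\le N-1$), $(A_\dagger\pi)_{N-1+j}=\sum_i\pi_{ij}$; $r_\dagger=(r_1,\dots,r_{N-1})$; $(\mathrm{P}_{\mathrm{OT}})$: $\min c^T\pi$ s.t. $A_\dagger\pi=(r_\dagger,s)$, $\pi\ge0$, for a cost vector $c$. A basis is $I$ with $|I|=2N-1$ and $A_{\dagger I}$ invertible; $\pi(I,v)$ has coordinates $A_{\dagger I}^{-1}v$ on $I$, zero elsewhere; $I$ is dual feasible if $A_\dagger^T(A_{\dagger I}^{-T}c_I)\le c$. $\partial H$ denotes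 the topological boundary. For $v\in\Delta_N$, $\Sigma(v)$ has diagonal entries $v_i(1-v_i)$ and off-diagonal entries $-v_iv_j$; $G^1$ is centred Gaussian on $\mathbb{R}^{N-1}$ with covariance the upper-left $(N-1)\times(N-1)$ block of $\Sigma(r)$; $G^2$ is centred Gaussian on $\mathbb{R}^N$ with covariance $\Sigma(s)$. *)

theory Defs
  imports "HOL-Probability.Probability"
begin

text \<open>Index set {1..N} is modelled by the finite type 'm option (N = CARD('m option));
  the element None plays the role of the last index N, so the entries of the reduced
  marginal r_dagger are indexed by 'm.  Vectors in R^(2N-1) are pairs (first N-1 coordinates, last N).\<close>

definition ri_simplex :: "(real^'n::finite) set" where
  "ri_simplex = {r. (\<forall>i. r $ i > 0) \<and> sum (\<lambda>i. r $ i) UNIV = 1}"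

definition rdag :: "real^('m::finite option) \<Rightarrow> real^'m" where
  "rdag r = (\<chi> i. r $ Some i)"

definition Adag :: "('m::finite option \<times> 'm option \<Rightarrow> real) \<Rightarrow> (real^'m) \<times> (real^('m option))" where
  "Adag x = ((\<chi> i. \<Sum>j\<in>UNIV. x (Some i, j)), (\<chi> j. \<Sum>i\<in>UNIV. x (i, j)))"

definition AdagT :: "(real^'m) \<times> (real^('m::finite option)) \<Rightarrow> ('m option \<times> 'm option \<Rightarrow> real)" where
  "AdagT y p = (case fst p of Some i \<Rightarrow> fst y $ i | None \<Rightarrow> 0) + snd y $ snd p"

text \<open>I is a basis: |I| = 2N-1 and the column submatrix A_dagger_I is invertible,
  i.e. the map from vectors supported on I to R^(2N-1) given by A_dagger is bijective.\<close>
definition is_basis :: "('m::finite option \<times> 'm option) set \<Rightarrow> bool" where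
  "is_basis I \<longleftrightarrow> card I = 2 * CARD('m option) - 1 \<and>
     (\<forall>v. \<exists>!x. (\<forall>p. p \<notin> I \<longrightarrow> x p = 0) \<and> Adag x = v)"

text \<open>pi(I,v): coordinates A_dagger_I^{-1} v on I, zero elsewhere.\<close>
definition pi_sol :: "('m::finite option \<times> 'm option) set \<Rightarrow> (real^'m) \<times> (real^('m option))
    \<Rightarrow> ('m option \<times> 'm option \<Rightarrow> real)" where
  "pi_sol I v = (THE x. (\<forall>p. p \<notin> I \<longrightarrow> x p = 0) \<and> Adag x = v)"

text \<open>Dual feasibility: y = A_dagger_I^{-T} c_I (the unique y with (A_dagger^T y)_p = c_p
  for p in I) satisfies A_dagger^T y \<le> c.\<close>
definition dual_feasible :: "('m::finite option \<times> 'm option \<Rightarrow> real) \<Rightarrow> ('m option \<times> 'm option) set \<Rightarrow> bool" where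
  "dual_feasible c I \<longleftrightarrow>
     (let y = (THE y. \<forall>p\<in>I. AdagT y p = c p) in \<forall>p. AdagT y p \<le> c p)"

text \<open>The cone H: for every position j whose basis element p (the j-th element of I)
  has pi_star p = 0, require [A_dagger_I^{-1} v]_j = pi(I,v)_p \<ge> 0.\<close>
definition coneH :: "('m::finite option \<times> 'm option) set \<Rightarrow> ('m option \<times> 'm option \<Rightarrow> real)
    \<Rightarrow> ((real^'m) \<times> (real^('m option))) set" where
  "coneH I pstar = {v. \<forall>p\<in>I. pstar p = 0 \<longrightarrow> pi_sol I v p \<ge> 0}"

definition SigmaM :: "real^'n \<Rightarrow> real^'n^'n::finite" where
  "SigmaM v = (\<chi> i j. if i = j then v $ i * (1 - v $ i) else - (v $ i * v $ j))"

text \<open>Centred Gaussian law with covariance matrix S (possibly degenerate), defined via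
  its characteristic function.\<close>
definition centred_gaussian :: "(real^'k::finite) measure \<Rightarrow> real^'k^'k \<Rightarrow> bool" where
  "centred_gaussian M S \<longleftrightarrow> sets M = sets borel \<and> prob_space M \<and>
     (\<forall>t. (\<integral>x. cis (t \<bullet> x) \<partial>M) = complex_of_real (exp (- (t \<bullet> (S *v t)) / 2)))"

end

theory Submission
  imports Defs
begin

text \<open>Each basis coordinate v \<mapsto> pi(I,v)_p is a linear functional, so H is a finite
  intersection of closed half-spaces and its frontier lies in the union of the hyperplanes
  pi(I,v)_p = 0.  Evaluated at G, such a functional a \<bullet> G1 + b \<bullet> G2 is a centred Gaussian
  whose variance is the sum of two multinomial quadratic forms.  Because r and s have full
  support, that variance vanishes only if a = 0 and b is constant; but then pi(I,v)_p would be
  a multiple of the total mass of v, which fails on the unit couplings at p and at a second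
  basis element.  So every hyperplane is hit with probability zero.\<close>

lemma
  assumes "is_basis I"
  shows pi_sol_outside_basis: "p \<notin> I \<Longrightarrow> pi_sol I v p = 0"
    and Adag_pi_sol: "Adag (pi_sol I v) = v"
proof -
  have "\<exists>!x. (\<forall>p. p \<notin> I \<longrightarrow> x p = 0) \<and> Adag x = v"
    using assms unfolding is_basis_def by blast
  then have "(\<forall>p. p \<notin> I \<longrightarrow> pi_sol I v p = 0) \<and> Adag (pi_sol I v) = v"
    unfolding pi_sol_def by (rule theI')
  then show "p \<notin> I \<Longrightarrow> pi_sol I v p = 0" and "Adag (pi_sol I v) = v" by blast+
qed

lemma pi_sol_Adag:
  assumes "is_basis I" and "\<forall>p. p \<notin> I \<longrightarrow> x p = 0"
  shows "pi_sol I (Adag x) = x"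
  using assms pi_sol_outside_basis[OF assms(1)] Adag_pi_sol[OF assms(1), of "Adag x"]
  unfolding is_basis_def by blast

lemma Adag_add: "Adag (\<lambda>q. x q + y q) = Adag x + Adag y"
  by (simp add: Adag_def prod_eq_iff vec_eq_iff sum.distrib)

lemma Adag_scale: "Adag (\<lambda>q. c * x q) = c *\<^sub>R Adag x"
  by (simp add: Adag_def prod_eq_iff vec_eq_iff sum_distrib_left)

lemma linear_pi_sol:
  assumes "is_basis I"
  shows "linear (\<lambda>v. pi_sol I v p)"
proof (rule linearI)
  fix u v :: "(real^'a) \<times> (real^'a option)" and c :: real
  have "pi_sol I (u + v) = (\<lambda>q. pi_sol I u q + pi_sol I v q)"
    using pi_sol_Adag[OF assms, of "\<lambda>q. pi_sol I u q + pi_sol I v q"]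
    by (simp add: Adag_add Adag_pi_sol[OF assms] pi_sol_outside_basis[OF assms])
  then show "pi_sol I (u + v) p = pi_sol I u p + pi_sol I v p" by simp
  have "pi_sol I (c *\<^sub>R u) = (\<lambda>q. c * pi_sol I u q)"
    using pi_sol_Adag[OF assms, of "\<lambda>q. c * pi_sol I u q"]
    by (simp add: Adag_scale Adag_pi_sol[OF assms] pi_sol_outside_basis[OF assms])
  then show "pi_sol I (c *\<^sub>R u) p = c *\<^sub>R pi_sol I u p" by simp
qed

lemma pi_sol_eq_inner:
  assumes "is_basis I"
  shows "pi_sol I v p = adjoint (\<lambda>v. pi_sol I v p) 1 \<bullet> v"
  using adjoint_works[OF linear_pi_sol[OF assms], where x=v and y=1] by (simp add: inner_commute)

lemma is_basis_other_element:
  assumes "is_basis I"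
  obtains q where "q \<in> I" "q \<noteq> p"
proof -
  have "card {None, Some (undefined::'a)} \<le> CARD('a::finite option)" by (rule card_mono) auto
  then have "card I \<ge> 3" using assms by (simp add: is_basis_def)
  then have "\<not> I \<subseteq> {p}" using card_mono[of "{p}" I] by auto
  then show ?thesis using that by blast
qed

lemma pi_sol_coordinate_nonconstant:
  fixes I :: "('m::finite option \<times> 'm option) set"
  assumes B: "is_basis I" and "p \<in> I" "q \<in> I" "q \<noteq> p"
    and coeff: "\<And>v. pi_sol I v p = a \<bullet> fst v + b \<bullet> snd v"
  shows "a \<noteq> 0 \<or> (\<exists>j k. b $ j \<noteq> b $ k)"
proof (rule ccontr)
  assume "\<not> ?thesis"
  then obtain \<beta> where "a = 0" and b: "\<And>j. b $ j = \<beta>" by blast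
  define e where "e u = (\<lambda>p'. if p' = u then 1 else 0 :: real)" for u :: "'m option \<times> 'm option"
  have "e u p = \<beta>" if "u \<in> I" for u
  proof -
    have "e u p = pi_sol I (Adag (e u)) p"
      using pi_sol_Adag[OF B, of "e u"] that by (auto simp: e_def)
    also have "\<dots> = b \<bullet> snd (Adag (e u))"
      by (simp add: coeff \<open>a = 0\<close>)
    also have "\<dots> = \<beta> * (\<Sum>j\<in>UNIV. \<Sum>i\<in>UNIV. e u (i, j))"
      by (simp add: inner_vec_def Adag_def b sum_distrib_left)
    also have "(\<Sum>j\<in>UNIV. \<Sum>i\<in>UNIV. e u (i, j)) = 1"
    proof -
      have "(\<Sum>i\<in>UNIV. e u (i, j)) = (if j = snd u then 1 else 0)" for j
        by (cases u, cases "j = snd u") (simp_all add: e_def)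
      then show ?thesis by simp
    qed
    finally show ?thesis by simp
  qed
  from this[of p] this[of q] assms(2-4) show False by (simp add: e_def)
qed

lemma weighted_variance_eq_pairwise:
  fixes w f :: "'n::finite \<Rightarrow> real"
  assumes "sum w UNIV = 1"
  shows "(\<Sum>i\<in>UNIV. w i * (f i)\<^sup>2) - (\<Sum>i\<in>UNIV. w i * f i)\<^sup>2
       = (\<Sum>i\<in>UNIV. \<Sum>j\<in>UNIV. w i * w j * (f i - f j)\<^sup>2) / 2"
proof -
  have expand: "w i * w j * (f i - f j)\<^sup>2
      = w i * (f i)\<^sup>2 * w j + w i * (w j * (f j)\<^sup>2) - 2 * (w i * f i * (w j * f j))" for i j
    by (simp add: power2_eq_square algebra_simps)
  have "(\<Sum>i\<in>UNIV. \<Sum>j\<in>UNIV. w i * w j * (f i - f j)\<^sup>2)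
      = (\<Sum>i\<in>UNIV. \<Sum>j\<in>UNIV. w i * (f i)\<^sup>2 * w j) + (\<Sum>i\<in>UNIV. \<Sum>j\<in>UNIV. w i * (w j * (f j)\<^sup>2))
        - 2 * (\<Sum>i\<in>UNIV. \<Sum>j\<in>UNIV. w i * f i * (w j * f j))"
    unfolding expand by (simp add: sum_subtractf sum.distrib sum_distrib_left)
  also have "\<dots> = (\<Sum>i\<in>UNIV. w i * (f i)\<^sup>2) * sum w UNIV + sum w UNIV * (\<Sum>j\<in>UNIV. w j * (f j)\<^sup>2)
        - 2 * ((\<Sum>i\<in>UNIV. w i * f i) * (\<Sum>j\<in>UNIV. w j * f j))"
    by (simp only: sum_product)
  finally show ?thesis using assms by (simp add: power2_eq_square)
qed

lemma SigmaM_quadratic_form: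
  fixes v t :: "real^'n::finite"
  shows "t \<bullet> (SigmaM v *v t) = (\<Sum>i\<in>UNIV. v$i * (t$i)\<^sup>2) - (\<Sum>i\<in>UNIV. v$i * t$i)\<^sup>2"
proof -
  define C where "C = (\<Sum>j\<in>UNIV. v$j * t$j)"
  have row: "(SigmaM v *v t) $ i = v$i * t$i - v$i * C" for i
  proof -
    have "(SigmaM v *v t) $ i = (\<Sum>j\<in>UNIV. (if i = j then v$i * t$j else 0) - v$i * (v$j * t$j))"
      unfolding matrix_vector_mult_def SigmaM_def by (auto intro!: sum.cong simp: algebra_simps)
    then show ?thesis by (simp add: C_def sum_subtractf sum_distrib_left)
  qed
  have "t \<bullet> (SigmaM v *v t) = (\<Sum>i\<in>UNIV. v$i * (t$i)\<^sup>2 - (v$i * t$i) * C)"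
    unfolding inner_vec_def row by (intro sum.cong) (auto simp: power2_eq_square algebra_simps)
  also have "\<dots> = (\<Sum>i\<in>UNIV. v$i * (t$i)\<^sup>2) - (\<Sum>i\<in>UNIV. v$i * t$i) * C"
    by (simp add: sum_subtractf sum_distrib_right)
  finally show ?thesis by (simp add: C_def power2_eq_square)
qed

lemma SigmaM_quadratic_form_nonneg:
  fixes v t :: "real^'n::finite"
  assumes "\<And>i. v$i \<ge> 0" and "(\<Sum>i\<in>UNIV. v$i) = 1"
  shows "t \<bullet> (SigmaM v *v t) \<ge> 0"
  unfolding SigmaM_quadratic_form weighted_variance_eq_pairwise[of "\<lambda>i. v$i", OF assms(2)]
  using assms(1) by (intro divide_nonneg_pos sum_nonneg mult_nonneg_nonneg) auto

lemma SigmaM_quadratic_form_eq_0: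
  fixes v t :: "real^'n::finite"
  assumes pos: "\<And>i. v$i > 0" and "(\<Sum>i\<in>UNIV. v$i) = 1"
    and "t \<bullet> (SigmaM v *v t) = 0"
  shows "t$i = t$j"
proof -
  have nonneg: "v$i * v$j * (t$i - t$j)\<^sup>2 \<ge> 0" for i j
    using pos by (simp add: less_imp_le)
  have "(\<Sum>i\<in>UNIV. \<Sum>j\<in>UNIV. v$i * v$j * (t$i - t$j)\<^sup>2) = 0"
    using assms(3) unfolding SigmaM_quadratic_form
      weighted_variance_eq_pairwise[of "\<lambda>i. v$i", OF assms(2)] by simp
  then have "v$i * v$j * (t$i - t$j)\<^sup>2 = 0"
    using nonneg by (simp only: sum_nonneg_eq_0_iff sum_nonneg finite) blast
  with pos[of i] pos[of j] show ?thesis by simp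
qed

lemma sum_UNIV_option:
  fixes g :: "'m::finite option \<Rightarrow> 'a::comm_monoid_add"
  shows "(\<Sum>k\<in>UNIV. g k) = g None + (\<Sum>i\<in>UNIV. g (Some i))"
  by (simp add: UNIV_option_conv sum.reindex)

lemma SigmaM_principal_submatrix_form:
  fixes r :: "real^('m::finite option)" and a :: "real^'m"
  shows "a \<bullet> ((\<chi> i j. SigmaM r $ Some i $ Some j) *v a)
     = (\<chi> k. case k of None \<Rightarrow> 0 | Some i \<Rightarrow> a $ i) \<bullet>
         (SigmaM r *v (\<chi> k. case k of None \<Rightarrow> 0 | Some i \<Rightarrow> a $ i))"
proof -
  have "(\<chi> i j. SigmaM r $ Some i $ Some j) = SigmaM (rdag r)"
    by (simp add: vec_eq_iff SigmaM_def rdag_def)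
  then show ?thesis by (simp add: SigmaM_quadratic_form sum_UNIV_option rdag_def)
qed

lemma frontier_Collect_nonneg_subset:
  fixes L :: "'i \<Rightarrow> 'a::topological_space \<Rightarrow> real"
  assumes "finite K" and cont: "\<And>i. i \<in> K \<Longrightarrow> continuous_on UNIV (L i)"
  shows "frontier {x. \<forall>i\<in>K. 0 \<le> L i x} \<subseteq> {x. \<exists>i\<in>K. L i x = 0}"
proof -
  let ?H = "{x. \<forall>i\<in>K. 0 \<le> L i x}"
  have "closed ?H"
    using closed_INT[of K "\<lambda>i. {x. 0 \<le> L i x}"] cont
    by (simp add: closed_Collect_le Collect_ball_eq)
  moreover have "{x. \<forall>i\<in>K. 0 < L i x} \<subseteq> interior ?H"
  proof (rule interior_maximal)
    show "open {x. \<forall>i\<in>K. 0 < L i x}"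
      using open_INT[of K "\<lambda>i. {x. 0 < L i x}"] cont \<open>finite K\<close>
      by (simp add: open_Collect_less Collect_ball_eq)
  qed auto
  ultimately show ?thesis
    by (force simp: frontier_def)
qed

lemma (in prob_space) indep_var_compose_if_measure_rectangles:
  assumes X: "X \<in> measurable M S" and Y: "Y \<in> measurable M T"
    and f: "f \<in> measurable S N" and g: "g \<in> measurable T N"
    and rect: "\<forall>A\<in>sets S. \<forall>B\<in>sets T.
      prob {\<omega>\<in>space M. X \<omega> \<in> A \<and> Y \<omega> \<in> B}
        = prob {\<omega>\<in>space M. X \<omega> \<in> A} * prob {\<omega>\<in>space M. Y \<omega> \<in> B}"
  shows "indep_var N (\<lambda>\<omega>. f (X \<omega>)) N (\<lambda>\<omega>. g (Y \<omega>))"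
proof -
  let ?X = "\<lambda>\<omega>. f (X \<omega>)" and ?Y = "\<lambda>\<omega>. g (Y \<omega>)"
  have X': "?X \<in> measurable M N" and Y': "?Y \<in> measurable M N"
    using X Y f g by measurable
  interpret X: prob_space "distr M N ?X" using X' by (rule prob_space_distr)
  interpret Y: prob_space "distr M N ?Y" using Y' by (rule prob_space_distr)
  have XY: "(\<lambda>\<omega>. (?X \<omega>, ?Y \<omega>)) \<in> measurable M (N \<Otimes>\<^sub>M N)" using X' Y' by measurable
  have "distr M N ?X \<Otimes>\<^sub>M distr M N ?Y = distr M (N \<Otimes>\<^sub>M N) (\<lambda>\<omega>. (?X \<omega>, ?Y \<omega>))"
  proof (rule pair_measure_eqI)
    show "sigma_finite_measure (distr M N ?X)" "sigma_finite_measure (distr M N ?Y)"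
      by (rule X.sigma_finite_measure, rule Y.sigma_finite_measure)
    show "sets (distr M N ?X \<Otimes>\<^sub>M distr M N ?Y) = sets (distr M (N \<Otimes>\<^sub>M N) (\<lambda>\<omega>. (?X \<omega>, ?Y \<omega>)))"
      by (simp add: sets_pair_measure_cong[OF sets_distr sets_distr])
    fix A B assume "A \<in> sets (distr M N ?X)" "B \<in> sets (distr M N ?Y)"
    then have A: "A \<in> sets N" and B: "B \<in> sets N" by auto
    have fA: "f -` A \<inter> space S \<in> sets S" and gB: "g -` B \<inter> space T \<in> sets T"
      using A B f g by (simp_all add: measurable_sets)
    have "?X -` A \<inter> space M = {\<omega>\<in>space M. X \<omega> \<in> f -` A \<inter> space S}"
      and "?Y -` B \<inter> space M = {\<omega>\<in>space M. Y \<omega> \<in> g -` B \<inter> space T}"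
      and "(\<lambda>\<omega>. (?X \<omega>, ?Y \<omega>)) -` (A \<times> B) \<inter> space M
             = {\<omega>\<in>space M. X \<omega> \<in> f -` A \<inter> space S \<and> Y \<omega> \<in> g -` B \<inter> space T}"
      using X Y by (auto simp: measurable_space)
    then show "emeasure (distr M N ?X) A * emeasure (distr M N ?Y) B
        = emeasure (distr M (N \<Otimes>\<^sub>M N) (\<lambda>\<omega>. (?X \<omega>, ?Y \<omega>))) (A \<times> B)"
      using rect[rule_format, OF fA gB] A B X' Y' XY
      by (simp add: emeasure_distr emeasure_eq_measure ennreal_mult)
  qed
  then show ?thesis using X' Y' by (simp add: indep_var_distribution_eq)
qed

lemma (in prob_space) char_distr_inner_centred_gaussian:
  fixes G :: "'a \<Rightarrow> real^'k::finite"
  assumes G: "G \<in> borel_measurable M" and "centred_gaussian (distr M borel G) S"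
  shows "char (distr M borel (\<lambda>\<omega>. c \<bullet> G \<omega>)) t = exp (- (t\<^sup>2 * (c \<bullet> (S *v c))) / 2)"
proof -
  have "char (distr M borel (\<lambda>\<omega>. c \<bullet> G \<omega>)) t = (CLINT \<omega>|M. iexp (t * (c \<bullet> G \<omega>)))"
    unfolding char_def using G
    by (intro integral_distr) (auto intro!: borel_measurable_continuous_onI continuous_intros)
  also have "\<dots> = (CLINT x|distr M borel G. cis ((t *\<^sub>R c) \<bullet> x))"
    using G by (subst integral_distr) (simp_all add: cis_conv_exp)
  also have "\<dots> = exp (- ((t *\<^sub>R c) \<bullet> (S *v (t *\<^sub>R c))) / 2)"
    using assms(2) unfolding centred_gaussian_def by blast
  also have "(t *\<^sub>R c) \<bullet> (S *v (t *\<^sub>R c)) = t\<^sup>2 * (c \<bullet> (S *v c))"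
    by (simp add: matrix_vector_mult_scaleR power2_eq_square)
  finally show ?thesis .
qed

lemma (in prob_space) prob_eq_0_if_char_std_normal:
  fixes X :: "'a \<Rightarrow> real"
  assumes X: "X \<in> borel_measurable M"
    and char: "\<And>t. char (distr M borel X) t = exp (- (t\<^sup>2) / 2)"
  shows "prob {\<omega>\<in>space M. X \<omega> = 0} = 0"
proof -
  have "distr M borel X = std_normal_distribution"
    using X by (intro Levy_uniqueness)
      (auto simp: real_distribution_distr real_dist_normal_dist char_std_normal_distribution char)
  moreover have "emeasure std_normal_distribution {0} = 0"
    by (simp add: emeasure_density nn_integral_indicator_singleton)
  ultimately have "emeasure M (X -` {0} \<inter> space M) = 0"
    using emeasure_distr[OF X, of "{0}"] by simp
  then show ?thesis by (simp add: measure_def vimage_def Int_def conj_commute)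
qed

lemma (in prob_space) prob_inner_add_eq_0_centred_gaussian:
  fixes G1 :: "'a \<Rightarrow> real^'k::finite" and G2 :: "'a \<Rightarrow> real^'l::finite"
  assumes G1: "G1 \<in> borel_measurable M" and G2: "G2 \<in> borel_measurable M"
    and indep: "indep_var borel (\<lambda>\<omega>. a \<bullet> G1 \<omega>) borel (\<lambda>\<omega>. b \<bullet> G2 \<omega>)"
    and gauss1: "centred_gaussian (distr M borel G1) S1"
    and gauss2: "centred_gaussian (distr M borel G2) S2"
    and var_pos: "a \<bullet> (S1 *v a) + b \<bullet> (S2 *v b) > 0"
  shows "prob {\<omega>\<in>space M. a \<bullet> G1 \<omega> + b \<bullet> G2 \<omega> = 0} = 0"
proof -
  txt \<open>Rescale to unit variance: the only Gaussian characteristic function in the library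
    is that of the standard normal law.\<close>
  define k where "k = 1 / sqrt (a \<bullet> (S1 *v a) + b \<bullet> (S2 *v b))"
  have "k > 0" and k: "k\<^sup>2 * (a \<bullet> (S1 *v a) + b \<bullet> (S2 *v b)) = 1"
    using var_pos by (simp_all add: k_def power_divide)
  define X1 where "X1 = (\<lambda>\<omega>. (k *\<^sub>R a) \<bullet> G1 \<omega>)"
  define X2 where "X2 = (\<lambda>\<omega>. (k *\<^sub>R b) \<bullet> G2 \<omega>)"
  have X1: "X1 \<in> borel_measurable M" and X2: "X2 \<in> borel_measurable M"
    unfolding X1_def X2_def using G1 G2 by measurable
  have "indep_var borel X1 borel X2"
    using indep_var_compose[OF indep, of "(*) k" borel "(*) k" borel]
    by (simp add: X1_def X2_def comp_def)
  have char1: "char (distr M borel X1) t = exp (- (t\<^sup>2 * k\<^sup>2 * (a \<bullet> (S1 *v a))) / 2)" for t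
    using char_distr_inner_centred_gaussian[OF G1 gauss1, of "k *\<^sub>R a" t]
    by (simp add: X1_def matrix_vector_mult_scaleR power2_eq_square mult.assoc)
  have char2: "char (distr M borel X2) t = exp (- (t\<^sup>2 * k\<^sup>2 * (b \<bullet> (S2 *v b))) / 2)" for t
    using char_distr_inner_centred_gaussian[OF G2 gauss2, of "k *\<^sub>R b" t]
    by (simp add: X2_def matrix_vector_mult_scaleR power2_eq_square mult.assoc)
  have "char (distr M borel (\<lambda>\<omega>. X1 \<omega> + X2 \<omega>)) t = exp (- t\<^sup>2 / 2)" for t
  proof -
    have "char (distr M borel (\<lambda>\<omega>. X1 \<omega> + X2 \<omega>)) t
        = char (distr M borel X1) t * char (distr M borel X2) t"
      using \<open>indep_var borel X1 borel X2\<close> by (rule char_distr_add)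
    also have "\<dots> = exp (- (t\<^sup>2 * k\<^sup>2 * (a \<bullet> (S1 *v a))) / 2 + - (t\<^sup>2 * k\<^sup>2 * (b \<bullet> (S2 *v b))) / 2)"
      unfolding char1 char2 exp_add by simp
    also have "\<dots> = exp (- (t\<^sup>2 * (k\<^sup>2 * (a \<bullet> (S1 *v a) + b \<bullet> (S2 *v b)))) / 2)"
      by (simp add: field_simps)
    finally show ?thesis unfolding k by simp
  qed
  with X1 X2 have "prob {\<omega>\<in>space M. X1 \<omega> + X2 \<omega> = 0} = 0"
    by (intro prob_eq_0_if_char_std_normal) simp_all
  moreover have "{\<omega>\<in>space M. X1 \<omega> + X2 \<omega> = 0} = {\<omega>\<in>space M. a \<bullet> G1 \<omega> + b \<bullet> G2 \<omega> = 0}"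
    using \<open>k > 0\<close> by (auto simp: X1_def X2_def simp flip: distrib_left)
  ultimately show ?thesis by simp
qed

lemma pi_sol_coordinate_variance_pos:
  fixes r s :: "real^('m::finite option)" and I :: "('m option \<times> 'm option) set"
  assumes r: "r \<in> ri_simplex" and s: "s \<in> ri_simplex"
    and B: "is_basis I" and "p \<in> I"
    and coord: "\<And>v. pi_sol I v p = a \<bullet> fst v + b \<bullet> snd v"
  shows "a \<bullet> ((\<chi> i j. SigmaM r $ Some i $ Some j) *v a) + b \<bullet> (SigmaM s *v b) > 0"
proof -
  define a' where "a' = (\<chi> k. case k of None \<Rightarrow> 0 | Some i \<Rightarrow> a $ i)"
  have r': "\<And>k. r $ k > 0" "(\<Sum>k\<in>UNIV. r $ k) = 1"
    and s': "\<And>k. s $ k > 0" "(\<Sum>k\<in>UNIV. s $ k) = 1"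
    using r s by (auto simp: ri_simplex_def)
  have form_a: "a \<bullet> ((\<chi> i j. SigmaM r $ Some i $ Some j) *v a) = a' \<bullet> (SigmaM r *v a')"
    unfolding a'_def by (rule SigmaM_principal_submatrix_form)
  have "a' \<bullet> (SigmaM r *v a') \<ge> 0" "b \<bullet> (SigmaM s *v b) \<ge> 0"
    using r' s' by (auto intro!: SigmaM_quadratic_form_nonneg simp: less_imp_le)
  moreover
  obtain q where "q \<in> I" "q \<noteq> p" using is_basis_other_element[OF B] .
  have "\<not> (a' \<bullet> (SigmaM r *v a') = 0 \<and> b \<bullet> (SigmaM s *v b) = 0)"
  proof
    assume "a' \<bullet> (SigmaM r *v a') = 0 \<and> b \<bullet> (SigmaM s *v b) = 0"
    then have "a' $ Some i = a' $ None" "b $ j = b $ k" for i j k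
      using SigmaM_quadratic_form_eq_0[OF r'] SigmaM_quadratic_form_eq_0[OF s'] by blast+
    then have "a = 0" "\<forall>j k. b $ j = b $ k" by (auto simp: a'_def vec_eq_iff)
    then show False
      using pi_sol_coordinate_nonconstant[OF B \<open>p \<in> I\<close> \<open>q \<in> I\<close> \<open>q \<noteq> p\<close> coord] by blast
  qed
  ultimately show ?thesis unfolding form_a by linarith
qed

lemma prob_pi_sol_coordinate_eq_0:
  fixes r s :: "real^('m::finite option)"
    and I :: "('m option \<times> 'm option) set"
    and G1 :: "'w \<Rightarrow> real^'m" and G2 :: "'w \<Rightarrow> real^('m option)"
  assumes r: "r \<in> ri_simplex" and s: "s \<in> ri_simplex"
    and B: "is_basis I" and "p \<in> I"
    and P: "prob_space P"
    and G1: "G1 \<in> borel_measurable P" and G2: "G2 \<in> borel_measurable P"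
    and rect: "\<forall>A\<in>sets (borel :: (real^'m) measure). \<forall>B\<in>sets (borel :: (real^('m option)) measure).
           measure P {\<omega>\<in>space P. G1 \<omega> \<in> A \<and> G2 \<omega> \<in> B}
             = measure P {\<omega>\<in>space P. G1 \<omega> \<in> A} * measure P {\<omega>\<in>space P. G2 \<omega> \<in> B}"
    and gauss1: "centred_gaussian (distr P borel G1) (\<chi> i j. SigmaM r $ Some i $ Some j)"
    and gauss2: "centred_gaussian (distr P borel G2) (SigmaM s)"
  shows "measure P {\<omega>\<in>space P. pi_sol I (G1 \<omega>, G2 \<omega>) p = 0} = 0"
proof -
  interpret prob_space P by fact
  define w where "w = adjoint (\<lambda>v. pi_sol I v p) 1"
  have coord: "pi_sol I v p = fst w \<bullet> fst v + snd w \<bullet> snd v" for v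
    using pi_sol_eq_inner[OF B, of v p] by (simp add: w_def inner_prod_def)
  have "indep_var borel (\<lambda>\<omega>. fst w \<bullet> G1 \<omega>) borel (\<lambda>\<omega>. snd w \<bullet> G2 \<omega>)"
    using G1 G2 rect by (intro indep_var_compose_if_measure_rectangles) auto
  from G1 G2 this gauss1 gauss2 pi_sol_coordinate_variance_pos[OF r s B \<open>p \<in> I\<close> coord]
  have "prob {\<omega>\<in>space P. fst w \<bullet> G1 \<omega> + snd w \<bullet> G2 \<omega> = 0} = 0"
    by (rule prob_inner_add_eq_0_centred_gaussian)
  then show ?thesis by (simp add: coord)
qed

theorem lemmaC1:
  fixes r s :: "real^('m::finite option)"
    and c :: "'m option \<times> 'm option \<Rightarrow> real"
    and I :: "('m option \<times> 'm option) set"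
    and P :: "'w measure"
    and G1 :: "'w \<Rightarrow> real^'m"
    and G2 :: "'w \<Rightarrow> real^('m option)"
  assumes "r \<in> ri_simplex" and "s \<in> ri_simplex"
    and "is_basis I" and "dual_feasible c I"
    and "\<forall>p. pi_sol I (rdag r, s) p \<ge> 0"
    and "prob_space P"
    and "G1 \<in> borel_measurable P" and "G2 \<in> borel_measurable P"
    and "\<forall>A\<in>sets (borel :: (real^'m) measure). \<forall>B\<in>sets (borel :: (real^('m option)) measure).
           measure P {\<omega>\<in>space P. G1 \<omega> \<in> A \<and> G2 \<omega> \<in> B}
             = measure P {\<omega>\<in>space P. G1 \<omega> \<in> A} * measure P {\<omega>\<in>space P. G2 \<omega> \<in> B}"
    and "centred_gaussian (distr P borel G1) (\<chi> i j. SigmaM r $ Some i $ Some j)"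
    and "centred_gaussian (distr P borel G2) (SigmaM s)"
  shows "measure P {\<omega> \<in> space P. (G1 \<omega>, G2 \<omega>) \<in> frontier (coneH I (pi_sol I (rdag r, s)))} = 0"
proof -
  interpret prob_space P by fact
  define E where "E p = {\<omega>\<in>space P. pi_sol I (G1 \<omega>, G2 \<omega>) p = 0}" for p
  have "finite I"
    using \<open>is_basis I\<close> by (intro card_ge_0_finite) (simp add: is_basis_def)
  have cont: "continuous_on UNIV (\<lambda>v. pi_sol I v p)" for p
    using linear_pi_sol[OF \<open>is_basis I\<close>] by (simp add: linear_continuous_on linear_conv_bounded_linear)
  have "coneH I (pi_sol I (rdag r, s))
      = {v. \<forall>p\<in>{p\<in>I. pi_sol I (rdag r, s) p = 0}. 0 \<le> pi_sol I v p}"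
    by (auto simp: coneH_def)
  also have "frontier \<dots> \<subseteq> {v. \<exists>p\<in>{p\<in>I. pi_sol I (rdag r, s) p = 0}. pi_sol I v p = 0}"
    using \<open>finite I\<close> cont by (intro frontier_Collect_nonneg_subset) simp_all
  finally have "{\<omega> \<in> space P. (G1 \<omega>, G2 \<omega>) \<in> frontier (coneH I (pi_sol I (rdag r, s)))}
      \<subseteq> (\<Union>p\<in>I. E p)"
    unfolding E_def by blast
  moreover have E: "E p \<in> sets P" for p
  proof -
    have "(\<lambda>\<omega>. pi_sol I (G1 \<omega>, G2 \<omega>) p) \<in> borel_measurable P"
      using borel_measurable_continuous_onI[OF cont] assms(7,8) by measurable
    from measurable_sets[OF this, of "{0}"] show ?thesis
      by (simp add: E_def vimage_def Int_def conj_commute)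
  qed
  ultimately have "prob {\<omega> \<in> space P. (G1 \<omega>, G2 \<omega>) \<in> frontier (coneH I (pi_sol I (rdag r, s)))}
      \<le> prob (\<Union>p\<in>I. E p)"
    using \<open>finite I\<close> by (intro finite_measure_mono) auto
  also have "\<dots> \<le> (\<Sum>p\<in>I. prob (E p))"
    using \<open>finite I\<close> E by (rule measure_UNION_le)
  also have "\<dots> = 0"
    unfolding E_def using assms(1-3,6-11) by (simp add: prob_pi_sol_coordinate_eq_0)
  finally show ?thesis using measure_nonneg by (rule antisym)
qed

end
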